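(* Let $A \in \mathfrak t$, let $\Phi_{\mathfrak h} = \{\alpha \in \Phi_{\mathfrak g} : \alpha(A) = 0\}$, let $U = \bigcap_{\alpha \in \Phi_{\mathfrak h}} \ker(\alpha) \subseteq \mathfrak t$ (with $U = \mathfrak t$ if $\Phi_{\mathfrak h} = \varnothing$), and let $$\mathbf B = U \cap \bigcap_{\alpha \in \Phi_{\mathfrak g} \setminus \Phi_{\mathfrak h}} \bigl(\mathfrak t \setminus \ker(\alpha)\bigr) \subseteq \mathfrak t .$$ Then $\operatorname{Stab}_{W_{\mathfrak g}}(U) = \operatorname{Stab}_{W_{\mathfrak g}}(\mathbf B)$, and $(W_{\mathfrak g} A) \cap \mathbf B = \mathcal O_A$, where $\mathcal O_A$ is the orbit of $A$ under the group $\operatorname{Stab}_{W_{\mathfrak g}}(\mathbf B)$.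
   Context: $G$ is a connected complex reductive Lie group, $\mathfrak g = \mathrm{Lie}(G)$, $T \subseteq G$ a maximal torus, $\mathfrak t = \mathrm{Lie}(T)$, $\Phi_{\mathfrak g} \subseteq \mathfrak t^\vee$ the root system of $(\mathfrak g,\mathfrak t)$, and $W_{\mathfrak g} = N_G(T)/T$ the Weyl group, acting on $\mathfrak t$. For a subset $S \subseteq \mathfrak t$, the setwise stabiliser is $\operatorname{Stab}_{W_{\mathfrak g}}(S) = \{w \in W_{\mathfrak g} : w(S) \subseteq S\}$. *)

theory Defs
  imports "HOL-Analysis.Analysis"
begin

text \<open>The Cartan subalgebra t is modelled as complex ^ 'n (coordinates w.r.t. a basis);
  its dual is identified with complex ^ 'n via the coordinate pairing.\<close>

definition pair :: "complex ^ 'n \<Rightarrow> complex ^ 'n \<Rightarrow> complex" where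
  "pair \<alpha> x = (\<Sum>i\<in>UNIV. \<alpha> $ i * x $ i)"

definition refl :: "complex ^ 'n \<Rightarrow> complex ^ 'n \<Rightarrow> complex ^ 'n \<Rightarrow> complex ^ 'n" where
  "refl \<alpha> \<alpha>v x = x - pair \<alpha> x *s \<alpha>v"

text \<open>Dual reflection on t-dual: beta maps to beta - beta(alpha-check) alpha (= beta o s_alpha).\<close>
definition refl_dual :: "complex ^ 'n \<Rightarrow> complex ^ 'n \<Rightarrow> complex ^ 'n \<Rightarrow> complex ^ 'n" where
  "refl_dual \<alpha> \<alpha>v \<beta> = \<beta> - pair \<beta> \<alpha>v *s \<alpha>"

text \<open>Reduced root datum (roots Phi in t-dual, coroot map cor into t), as arising from
  (G,T) for a connected complex reductive group G.\<close>
definition reduced_root_datum ::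
  "(complex ^ 'n) set \<Rightarrow> (complex ^ 'n \<Rightarrow> complex ^ 'n) \<Rightarrow> bool" where
  "reduced_root_datum \<Phi> cor \<longleftrightarrow>
     finite \<Phi> \<and> 0 \<notin> \<Phi> \<and>
     (\<forall>\<alpha>\<in>\<Phi>. pair \<alpha> (cor \<alpha>) = 2) \<and>
     (\<forall>\<alpha>\<in>\<Phi>. \<forall>\<beta>\<in>\<Phi>. pair \<beta> (cor \<alpha>) \<in> \<int>) \<and>
     (\<forall>\<alpha>\<in>\<Phi>. \<forall>\<beta>\<in>\<Phi>. refl_dual \<alpha> (cor \<alpha>) \<beta> \<in> \<Phi>) \<and>
     (\<forall>\<alpha>\<in>\<Phi>. \<forall>\<beta>\<in>\<Phi>. cor (refl_dual \<alpha> (cor \<alpha>) \<beta>) = refl \<alpha> (cor \<alpha>) (cor \<beta>)) \<and>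
     (\<forall>\<alpha>\<in>\<Phi>. \<forall>c. c *s \<alpha> \<in> \<Phi> \<longrightarrow> c = 1 \<or> c = -1)"

inductive_set weyl_group ::
  "(complex ^ 'n) set \<Rightarrow> (complex ^ 'n \<Rightarrow> complex ^ 'n) \<Rightarrow> (complex ^ 'n \<Rightarrow> complex ^ 'n) set"
  for \<Phi> cor where
  id: "id \<in> weyl_group \<Phi> cor"
| step: "\<alpha> \<in> \<Phi> \<Longrightarrow> w \<in> weyl_group \<Phi> cor \<Longrightarrow> refl \<alpha> (cor \<alpha>) \<circ> w \<in> weyl_group \<Phi> cor"

definition setwise_stab ::
  "(complex ^ 'n \<Rightarrow> complex ^ 'n) set \<Rightarrow> (complex ^ 'n) set \<Rightarrow> (complex ^ 'n \<Rightarrow> complex ^ 'n) set" where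
  "setwise_stab W S = {w \<in> W. w ` S \<subseteq> S}"

end

theory Submission
  imports Defs
begin

text \<open>Every element w of the Weyl group has a dual action on t-dual that permutes the roots:
  \<open>\<alpha> \<circ> w = \<sigma> \<alpha>\<close> for a permutation \<sigma> of \<Phi>. Hence the roots vanishing at \<open>w x\<close> are the
  \<sigma>-preimage of the roots vanishing at x. In this language U consists of the points at which all
  roots of \<Phi>h vanish, and B of those at which exactly the roots of \<Phi>h vanish. If \<open>w A \<in> U\<close>,
  then \<sigma> maps the finite set \<Phi>h into, hence onto, itself, so the \<sigma>-preimage of \<Phi>h is \<Phi>h and
  w preserves both U and B. As \<open>A \<in> B \<subseteq> U\<close>, each of \<open>w ` U \<subseteq> U\<close>, \<open>w ` B \<subseteq> B\<close> and
  \<open>w A \<in> B\<close> forces \<open>w A \<in> U\<close>, which gives both claims.\<close>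

lemma pair_diff_left: "pair (\<alpha> - \<beta>) x = pair \<alpha> x - pair \<beta> x"
  unfolding pair_def by (simp add: left_diff_distrib sum_subtractf)

lemma pair_diff_right: "pair \<alpha> (x - y) = pair \<alpha> x - pair \<alpha> y"
  unfolding pair_def by (simp add: right_diff_distrib sum_subtractf)

lemma pair_scale_left: "pair (c *s \<alpha>) x = c * pair \<alpha> x"
  unfolding pair_def by (simp add: sum_distrib_left algebra_simps)

lemma pair_scale_right: "pair \<alpha> (c *s x) = c * pair \<alpha> x"
  unfolding pair_def by (simp add: sum_distrib_left algebra_simps)

lemma pair_refl: "pair \<alpha> (refl \<gamma> v x) = pair (refl_dual \<gamma> v \<alpha>) x"
  unfolding refl_def refl_dual_def
  by (simp add: pair_diff_left pair_diff_right pair_scale_left pair_scale_right algebra_simps)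

lemma refl_dual_refl_dual:
  assumes "pair \<gamma> v = 2"
  shows "refl_dual \<gamma> v (refl_dual \<gamma> v \<beta>) = \<beta>"
  using assms unfolding refl_dual_def[of \<gamma> v "refl_dual \<gamma> v \<beta>"]
  by (simp add: refl_dual_def pair_diff_left pair_scale_left scaleR_2 vector_sadd_rdistrib)

lemma weyl_group_dual_permutation:
  assumes coroot: "\<And>\<alpha>. \<alpha> \<in> \<Phi> \<Longrightarrow> pair \<alpha> (cor \<alpha>) = 2"
    and refl_closed: "\<And>\<alpha> \<beta>. \<alpha> \<in> \<Phi> \<Longrightarrow> \<beta> \<in> \<Phi> \<Longrightarrow> refl_dual \<alpha> (cor \<alpha>) \<beta> \<in> \<Phi>"
    and "w \<in> weyl_group \<Phi> cor"
  obtains \<sigma> where "bij_betw \<sigma> \<Phi> \<Phi>" "\<And>\<alpha> x. pair \<alpha> (w x) = pair (\<sigma> \<alpha>) x"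
proof -
  have "\<exists>\<sigma>. bij_betw \<sigma> \<Phi> \<Phi> \<and> (\<forall>\<alpha> x. pair \<alpha> (w x) = pair (\<sigma> \<alpha>) x)"
    using \<open>w \<in> weyl_group \<Phi> cor\<close>
  proof (induction rule: weyl_group.induct)
    case id
    show ?case using bij_betw_id by fastforce
  next
    case (step \<gamma> w)
    let ?r = "refl_dual \<gamma> (cor \<gamma>)"
    obtain \<sigma> where \<sigma>: "bij_betw \<sigma> \<Phi> \<Phi>" "\<And>\<alpha> x. pair \<alpha> (w x) = pair (\<sigma> \<alpha>) x"
      using step.IH by blast
    have "bij_betw ?r \<Phi> \<Phi>"
      by (rule bij_betw_byWitness[where f' = ?r])
        (auto simp: refl_dual_refl_dual coroot refl_closed step.hyps)
    then have "bij_betw (\<sigma> \<circ> ?r) \<Phi> \<Phi>"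
      using \<sigma>(1) by (rule bij_betw_trans)
    moreover have "pair \<alpha> ((refl \<gamma> (cor \<gamma>) \<circ> w) x) = pair ((\<sigma> \<circ> ?r) \<alpha>) x" for \<alpha> x
      by (simp add: pair_refl \<sigma>(2))
    ultimately show ?case by blast
  qed
  then show ?thesis using that by blast
qed

lemma bij_betw_preimage_eq_if_image_subset:
  assumes "bij_betw \<sigma> S S" "finite S" "T \<subseteq> S" "\<sigma> ` T \<subseteq> T"
  shows "{x \<in> S. \<sigma> x \<in> T} = T"
proof -
  have inj: "inj_on \<sigma> S" using assms(1) by (rule bij_betw_imp_inj_on)
  have "\<sigma> ` T = T"
    using endo_inj_surj[of T \<sigma>] assms(2-4) inj_on_subset[OF inj assms(3)] finite_subset by blast
  then show ?thesis using inj assms(3,4) by (auto dest: inj_onD)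
qed

definition vanishing_roots :: "(complex ^ 'n) set \<Rightarrow> complex ^ 'n \<Rightarrow> (complex ^ 'n) set" where
  "vanishing_roots \<Phi> x = {\<alpha> \<in> \<Phi>. pair \<alpha> x = 0}"

lemma vanishing_roots_dual_permutation:
  assumes "bij_betw \<sigma> \<Phi> \<Phi>" "\<And>\<alpha> x. pair \<alpha> (w x) = pair (\<sigma> \<alpha>) x"
  shows "vanishing_roots \<Phi> (w x) = {\<alpha> \<in> \<Phi>. \<sigma> \<alpha> \<in> vanishing_roots \<Phi> x}"
  using bij_betw_apply[OF assms(1)] by (auto simp: vanishing_roots_def assms(2))

lemma dual_permutation_preserves_vanishing_roots:
  assumes "finite \<Phi>" "bij_betw \<sigma> \<Phi> \<Phi>" "\<And>\<alpha> x. pair \<alpha> (w x) = pair (\<sigma> \<alpha>) x"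
    and "vanishing_roots \<Phi> A \<subseteq> vanishing_roots \<Phi> (w A)"
  shows "vanishing_roots \<Phi> A \<subseteq> vanishing_roots \<Phi> x \<Longrightarrow>
           vanishing_roots \<Phi> A \<subseteq> vanishing_roots \<Phi> (w x)"
    and "vanishing_roots \<Phi> x = vanishing_roots \<Phi> A \<Longrightarrow>
           vanishing_roots \<Phi> (w x) = vanishing_roots \<Phi> A"
proof -
  let ?V = "vanishing_roots \<Phi>"
  note preimage = vanishing_roots_dual_permutation[OF assms(2,3)]
  have "\<sigma> ` ?V A \<subseteq> ?V A"
    using assms(4) unfolding preimage by blast
  moreover have "?V A \<subseteq> \<Phi>" by (auto simp: vanishing_roots_def)
  ultimately have fixed: "{\<alpha> \<in> \<Phi>. \<sigma> \<alpha> \<in> ?V A} = ?V A"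
    by (intro bij_betw_preimage_eq_if_image_subset[OF assms(2,1)])
  show "?V A \<subseteq> ?V x \<Longrightarrow> ?V A \<subseteq> ?V (w x)"
    using fixed unfolding preimage by blast
  show "?V x = ?V A \<Longrightarrow> ?V (w x) = ?V A"
    using fixed unfolding preimage by simp
qed

theorem lemma2p1:
  fixes \<Phi> :: "(complex ^ 'n) set" and cor :: "complex ^ 'n \<Rightarrow> complex ^ 'n"
    and A :: "complex ^ 'n"
  assumes "reduced_root_datum \<Phi> cor"
  defines "W \<equiv> weyl_group \<Phi> cor"
  defines "\<Phi>h \<equiv> {\<alpha> \<in> \<Phi>. pair \<alpha> A = 0}"
  defines "U \<equiv> {x. \<forall>\<alpha>\<in>\<Phi>h. pair \<alpha> x = 0}"
  defines "B \<equiv> U \<inter> {x. \<forall>\<alpha>\<in>\<Phi> - \<Phi>h. pair \<alpha> x \<noteq> 0}"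
  shows "setwise_stab W U = setwise_stab W B \<and>
         (\<lambda>w. w A) ` W \<inter> B = (\<lambda>w. w A) ` setwise_stab W B"
proof -
  have U_eq: "U = {x. vanishing_roots \<Phi> A \<subseteq> vanishing_roots \<Phi> x}"
    unfolding U_def \<Phi>h_def vanishing_roots_def by auto
  have B_eq: "B = {x. vanishing_roots \<Phi> x = vanishing_roots \<Phi> A}"
    unfolding B_def U_def \<Phi>h_def vanishing_roots_def by auto
  have A: "A \<in> B" "B \<subseteq> U" unfolding U_eq B_eq by auto
  have fin: "finite \<Phi>"
    and coroot: "\<And>\<alpha>. \<alpha> \<in> \<Phi> \<Longrightarrow> pair \<alpha> (cor \<alpha>) = 2"
    and refl_closed: "\<And>\<alpha> \<beta>. \<alpha> \<in> \<Phi> \<Longrightarrow> \<beta> \<in> \<Phi> \<Longrightarrow> refl_dual \<alpha> (cor \<alpha>) \<beta> \<in> \<Phi>"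
    using assms(1) unfolding reduced_root_datum_def by blast+
  have preserves: "w ` U \<subseteq> U" "w ` B \<subseteq> B" if "w \<in> W" "w A \<in> U" for w
  proof -
    obtain \<sigma> where \<sigma>: "bij_betw \<sigma> \<Phi> \<Phi>" "\<And>\<alpha> x. pair \<alpha> (w x) = pair (\<sigma> \<alpha>) x"
      using weyl_group_dual_permutation[OF coroot refl_closed] \<open>w \<in> W\<close> unfolding W_def by blast
    have "vanishing_roots \<Phi> A \<subseteq> vanishing_roots \<Phi> (w A)"
      using \<open>w A \<in> U\<close> unfolding U_eq by blast
    note preserved = dual_permutation_preserves_vanishing_roots[OF fin \<sigma> this]
    show "w ` U \<subseteq> U" unfolding U_eq using preserved(1) by blast
    show "w ` B \<subseteq> B" unfolding B_eq using preserved(2) by blast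
  qed
  have "setwise_stab W U = setwise_stab W B"
    unfolding setwise_stab_def using preserves A by blast
  moreover have "(\<lambda>w. w A) ` W \<inter> B = (\<lambda>w. w A) ` setwise_stab W B"
    unfolding setwise_stab_def using preserves A by blast
  ultimately show ?thesis ..
qed

end
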